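(* Let $c=\min_{x\in\partial D}\phi(x;p,p')$ (so $c>|p-p'|$), fix $0<s<\eta'$, let $q\in\Lambda_{\partial D}(p,p')$ and $A'=\frac{q-p'}{|q-p'|}$. Then $\Lambda_{\partial D}(p,p'+sA')=\{q\}$. Moreover, if in addition $s<\frac12(c-|p-p'|)$, then $S_q\big(E_{c-s}(p,p'+sA')\big)-S_q(\partial D)$ is positive definite on the common tangent plane $T_q(\partial D)=T_q(E_{c-s}(p,p'+sA'))=T_q(E_c(p,p'))$.
   Context: Let $D\subset\mathbb R^3$ be a nonempty bounded open set with $C^2$ boundary; $\nu_q$ is the unit outward normal. $p,p'\in\mathbb R^3\setminus\overline D$ with $[p,p']\cap\overline D=\emptyset$; $B'$ is the open ball with center $p'$ and radius $\eta'$, $\overline{B'}\cap\overline D=\emptyset$. $\phi(x;y,y')=|y-x|+|x-y'|$; $E_c(p,p')=\{x:\phi(x;p,p')=c\}$; $\Lambda_{\partial D}(p,p')=\{q\in\partial D:\phi(q;p,p')=\min_{x\in\partial D}\phi(x;p,p')\}$. Shape operators $S_q(\cdot)$ are taken at $q$ with respect to $\nu_q$ ($S_q(v)=-D_vN$). *)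

theory Defs
  imports "HOL-Analysis.Analysis"
begin

definition phi :: "real^3 \<Rightarrow> real^3 \<Rightarrow> real^3 \<Rightarrow> real" where
  "phi x y y' = norm (y - x) + norm (x - y')"

definition ellipsoid :: "real \<Rightarrow> real^3 \<Rightarrow> real^3 \<Rightarrow> (real^3) set" where
  "ellipsoid c p p' = {x. phi x p p' = c}"

definition Lambda :: "(real^3) set \<Rightarrow> real^3 \<Rightarrow> real^3 \<Rightarrow> (real^3) set" where
  "Lambda D p p' = {q \<in> frontier D. \<forall>x \<in> frontier D. phi q p p' \<le> phi x p p'}"

definition grad :: "(real^3 \<Rightarrow> real) \<Rightarrow> real^3 \<Rightarrow> real^3" where
  "grad F x = (\<chi> i. frechet_derivative F (at x) (axis i 1))"

definition C2_on :: "(real^3) set \<Rightarrow> (real^3 \<Rightarrow> real) \<Rightarrow> bool" where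
  "C2_on U F \<longleftrightarrow> (\<exists>g H. (\<forall>x\<in>U. (F has_derivative (\<lambda>h. g x \<bullet> h)) (at x) \<and>
                                 (g has_derivative (\<lambda>h. H x *v h)) (at x))
                        \<and> continuous_on U H)"

definition local_defining_function ::
  "(real^3) set \<Rightarrow> real^3 \<Rightarrow> (real^3) set \<Rightarrow> (real^3 \<Rightarrow> real) \<Rightarrow> bool" where
  "local_defining_function D q U \<rho> \<longleftrightarrow>
     open U \<and> q \<in> U \<and> C2_on U \<rho> \<and> (\<forall>x\<in>U. grad \<rho> x \<noteq> 0) \<and>
     D \<inter> U = {x\<in>U. \<rho> x < 0} \<and> frontier D \<inter> U = {x\<in>U. \<rho> x = 0}"

definition C2_boundary :: "(real^3) set \<Rightarrow> bool" where
  "C2_boundary D \<longleftrightarrow> (\<forall>q\<in>frontier D. \<exists>U \<rho>. local_defining_function D q U \<rho>)"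

definition outward_normal :: "(real^3 \<Rightarrow> real) \<Rightarrow> real^3 \<Rightarrow> real^3" where
  "outward_normal \<rho> q = grad \<rho> q /\<^sub>R norm (grad \<rho> q)"

definition tangent_plane :: "(real^3 \<Rightarrow> real) \<Rightarrow> real^3 \<Rightarrow> (real^3) set" where
  "tangent_plane F q = {v. grad F q \<bullet> v = 0}"

text \<open>Shape operator at q of the level surface {F = F q}, taken with respect to the unit
  normal n at q: N is the unit normal field +-grad F/|grad F| oriented so that N(q) is
  on the side of n, and S_q(v) = - D_v N.\<close>
definition shape_operator :: "(real^3 \<Rightarrow> real) \<Rightarrow> real^3 \<Rightarrow> real^3 \<Rightarrow> real^3 \<Rightarrow> real^3" where
  "shape_operator F n q v =
     - frechet_derivative (\<lambda>x. sgn (grad F q \<bullet> n) *\<^sub>R (grad F x /\<^sub>R norm (grad F x))) (at q) v"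

end

theory Submission
  imports Defs
begin

text \<open>
  Let \<open>A\<close> be the unit vector from \<open>p'\<close> to \<open>q\<close> and \<open>p'' = p' + s A\<close>. Moving the focus to \<open>p''\<close>
  lowers \<open>phi(x; p, \<cdot>)\<close> by at most \<open>s\<close>, with equality exactly on the ray from \<open>p'\<close> through \<open>A\<close>;
  on that ray the level \<open>c\<close> of \<open>phi(\<cdot>; p, p')\<close> is met only once, because the sublevel sets of
  \<open>phi\<close> are convex and contain \<open>p\<close>. So \<open>q\<close> is the only minimiser for the foci \<open>p, p''\<close>.

  For the curvature claim, \<open>q\<close> minimises \<open>phi(\<cdot>; p, p')\<close> on \<open>D\<close>, so no curve through \<open>q\<close> lowers
  both \<open>phi\<close> and a defining function \<open>\<rho>\<close> of \<open>D\<close>. Testing with parabolas shows that the two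
  gradients are antiparallel (so the tangent planes agree) and that the Hessian of the
  Lagrangian is nonnegative on the tangent plane, i.e. \<open>S_q(E_c(p, p')) \<ge> S_q(\<partial>D)\<close>.
  The Hessian of \<open>|x - a|\<close> is \<open>(|v|\<^sup>2 - (u \<bullet> v)\<^sup>2) / |x - a|\<close> with \<open>u = sgn (x - a)\<close>, which strictly
  grows when the focus \<open>p'\<close> moves towards \<open>q\<close>; hence \<open>S_q(E_{c-s}(p, p'')) > S_q(\<partial>D)\<close>.
\<close>

lemma has_derivative_sgn:
  fixes x :: "'a::real_inner"
  assumes "x \<noteq> 0"
  shows "(sgn has_derivative (\<lambda>h. (h - (sgn x \<bullet> h) *\<^sub>R sgn x) /\<^sub>R norm x)) (at x)"
proof -
  have sgn_eq: "(\<lambda>y. inverse (norm y) *\<^sub>R y) = sgn"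
    by (simp add: fun_eq_iff sgn_div_norm divide_inverse_commute)
  have "((\<lambda>y. inverse (norm y) *\<^sub>R y) has_derivative
      (\<lambda>h. inverse (norm x) *\<^sub>R h + (- (inverse (norm x) * (sgn x \<bullet> h) * inverse (norm x))) *\<^sub>R x)) (at x)"
    using assms by (auto intro!: derivative_eq_intros has_derivative_norm[THEN has_derivative_compose] simp: inner_commute)
  then show ?thesis
    unfolding sgn_eq by (rule has_derivative_eq_rhs) (auto simp: sgn_div_norm algebra_simps divide_inverse_commute)
qed

lemma has_derivative_norm_diff:
  fixes x a :: "'a::real_inner"
  assumes "x \<noteq> a"
  shows "((\<lambda>x. norm (x - a)) has_derivative (\<lambda>h. sgn (x - a) \<bullet> h)) (at x)"
  using has_derivative_compose[OF has_derivative_diff[OF has_derivative_ident has_derivative_const]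
      has_derivative_norm[of "x - a"]] assms
  by (simp add: inner_commute)

lemma has_derivative_sgn_diff:
  fixes x a :: "'a::real_inner"
  assumes "x \<noteq> a"
  shows "((\<lambda>x. sgn (x - a)) has_derivative
           (\<lambda>h. (h - (sgn (x - a) \<bullet> h) *\<^sub>R sgn (x - a)) /\<^sub>R norm (x - a))) (at x)"
  using has_derivative_compose[OF has_derivative_diff[OF has_derivative_ident has_derivative_const]
      has_derivative_sgn[of "x - a"]] assms
  by simp

lemma eventually_at_right_less_of_critical_point:
  fixes g g' :: "real \<Rightarrow> real"
  assumes deriv: "\<forall>\<^sub>F t in nhds 0. (g has_real_derivative g' t) (at t)"
    and critical: "g' 0 = 0" and second: "(g' has_real_derivative d) (at 0)" and "d < 0"
  shows "\<forall>\<^sub>F t in at_right 0. g t < g 0"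
proof -
  obtain e where "e > 0" and e: "\<And>t. \<bar>t\<bar> < e \<Longrightarrow> (g has_real_derivative g' t) (at t)"
    using deriv unfolding eventually_nhds_metric dist_real_def by auto
  obtain d' where "d' > 0" and d': "\<And>t. 0 < t \<Longrightarrow> t < d' \<Longrightarrow> g' t < 0"
    using DERIV_neg_dec_right[OF second \<open>d < 0\<close>] critical by auto
  have "g t < g 0" if "0 < t" "t < min e d'" for t
  proof -
    have "(g has_real_derivative g' x) (at x)" if "0 \<le> x" "x \<le> t" for x
      using e that \<open>t < min e d'\<close> by auto
    then obtain z where z: "0 < z" "z < t" "g t - g 0 = (t - 0) * g' z"
      using MVT2[of 0 t g g'] \<open>0 < t\<close> by blast
    moreover have "g' z < 0" using d' z that by simp
    ultimately show ?thesis using mult_pos_neg[OF \<open>0 < t\<close>, of "g' z"] by simp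
  qed
  then show ?thesis
    unfolding eventually_at_right_field using \<open>e > 0\<close> \<open>d' > 0\<close> by (intro exI[of _ "min e d'"]) auto
qed

lemma eventually_descent_along_parabola:
  fixes f :: "'a::real_inner \<Rightarrow> real"
  assumes "open U" "q \<in> U"
    and df: "\<And>x. x \<in> U \<Longrightarrow> (f has_derivative (\<lambda>h. G x \<bullet> h)) (at x)"
    and dG: "(G has_derivative G') (at q)"
    and tangent: "G q \<bullet> v = 0" and descent: "G' v \<bullet> v + 2 * k * (G q \<bullet> w) < 0"
  shows "\<forall>\<^sub>F t in at_right 0. q + t *\<^sub>R v + (t\<^sup>2 * k) *\<^sub>R w \<in> U
                              \<and> f (q + t *\<^sub>R v + (t\<^sup>2 * k) *\<^sub>R w) < f q"
proof -
  define \<gamma> where "\<gamma> t = q + t *\<^sub>R v + (t\<^sup>2 * k) *\<^sub>R w" for t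
  define g' where "g' t = G (\<gamma> t) \<bullet> (v + (2 * t * k) *\<^sub>R w)" for t
  have \<gamma>0: "\<gamma> 0 = q" by (simp add: \<gamma>_def)
  have d\<gamma>: "(\<gamma> has_derivative (\<lambda>h. h *\<^sub>R (v + (2 * t * k) *\<^sub>R w))) (at t)" for t
    unfolding \<gamma>_def by (auto intro!: derivative_eq_intros simp: algebra_simps power2_eq_square)
  have "open (\<gamma> -` U)"
    using \<open>open U\<close> unfolding \<gamma>_def by (intro continuous_open_vimage) (auto intro!: continuous_intros)
  then have in_U: "\<forall>\<^sub>F t in nhds 0. \<gamma> t \<in> U"
    unfolding eventually_nhds using \<gamma>0 \<open>q \<in> U\<close> by blast
  have second: "(g' has_real_derivative G' v \<bullet> v + 2 * k * (G q \<bullet> w)) (at 0)"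
  proof -
    have "((\<lambda>t. G (\<gamma> t)) has_derivative (\<lambda>h. G' (h *\<^sub>R v))) (at 0)"
      using has_derivative_compose[OF d\<gamma>[of 0], of G G'] dG \<gamma>0 by simp
    then have "(g' has_derivative (\<lambda>h. G q \<bullet> ((2 * h * k) *\<^sub>R w) + G' (h *\<^sub>R v) \<bullet> v)) (at 0)"
      unfolding g'_def[abs_def] using \<gamma>0 by (auto intro!: derivative_eq_intros)
    moreover have "linear G'" using dG has_derivative_linear by blast
    ultimately show ?thesis
      unfolding has_field_derivative_def
      by (auto elim!: has_derivative_eq_rhs simp: linear_scale algebra_simps)
  qed
  have "((\<lambda>t. f (\<gamma> t)) has_real_derivative g' t) (at t)" if "\<gamma> t \<in> U" for t
    using has_derivative_compose[OF d\<gamma> df[OF that]]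
    unfolding has_field_derivative_def g'_def by (rule has_derivative_eq_rhs) (simp add: fun_eq_iff)
  then have first: "\<forall>\<^sub>F t in nhds 0. ((\<lambda>t. f (\<gamma> t)) has_real_derivative g' t) (at t)"
    using in_U by (auto elim: eventually_mono)
  have critical: "g' 0 = 0" using tangent \<gamma>0 by (simp add: g'_def)
  have "\<forall>\<^sub>F t in at_right 0. f (\<gamma> t) < f (\<gamma> 0)"
    by (rule eventually_at_right_less_of_critical_point[OF first critical second descent])
  moreover have "\<forall>\<^sub>F t in at_right 0. \<gamma> t \<in> U"
    using in_U filter_leD[OF at_within_le_nhds] by blast
  ultimately show ?thesis
    by eventually_elim (simp add: \<gamma>_def)
qed

locale no_common_descent =
  fixes U :: "'a::real_inner set" and q :: 'a
    and f g :: "'a \<Rightarrow> real" and F G F' G' :: "'a \<Rightarrow> 'a"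
  assumes open_U: "open U" and q_in_U: "q \<in> U"
    and f_deriv: "\<And>x. x \<in> U \<Longrightarrow> (f has_derivative (\<lambda>h. F x \<bullet> h)) (at x)"
    and g_deriv: "\<And>x. x \<in> U \<Longrightarrow> (g has_derivative (\<lambda>h. G x \<bullet> h)) (at x)"
    and F_deriv: "(F has_derivative F') (at q)"
    and G_deriv: "(G has_derivative G') (at q)"
    and no_descent: "\<And>x. x \<in> U \<Longrightarrow> f x < f q \<Longrightarrow> g x < g q \<Longrightarrow> False"
begin

lemma parabola_not_common_descent:
  assumes "F q \<bullet> v = 0" "G q \<bullet> v = 0"
    and "F' v \<bullet> v + 2 * k * (F q \<bullet> w) < 0"
  shows "G' v \<bullet> v + 2 * k * (G q \<bullet> w) \<ge> 0"
proof (rule ccontr)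
  assume "\<not> ?thesis"
  then have "\<forall>\<^sub>F t in at_right 0. q + t *\<^sub>R v + (t\<^sup>2 * k) *\<^sub>R w \<in> U
                              \<and> g (q + t *\<^sub>R v + (t\<^sup>2 * k) *\<^sub>R w) < g q"
    using assms(2) by (intro eventually_descent_along_parabola[OF open_U q_in_U g_deriv G_deriv]) auto
  moreover have "\<forall>\<^sub>F t in at_right 0. f (q + t *\<^sub>R v + (t\<^sup>2 * k) *\<^sub>R w) < f q"
    using eventually_descent_along_parabola[OF open_U q_in_U f_deriv F_deriv assms(1,3)]
    by (auto elim: eventually_mono)
  ultimately have "\<forall>\<^sub>F t in at_right (0::real). False"
    by eventually_elim (use no_descent in blast)
  then show False by (simp add: eventually_False)
qed

text \<open>\<open>-(sgn (F q) + sgn (G q))\<close> is a descent direction for both functions unless the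
  gradients point in opposite directions.\<close>

lemma sgn_gradients_opposite:
  assumes "F q \<noteq> 0" "G q \<noteq> 0"
  shows "sgn (F q) = - sgn (G q)"
proof (rule ccontr)
  define u where "u = sgn (F q) + sgn (G q)"
  assume "sgn (F q) \<noteq> - sgn (G q)"
  then have "u \<noteq> 0" by (simp add: u_def eq_neg_iff_add_eq_0)
  then have "0 < u \<bullet> u" by simp
  have unit: "sgn x \<bullet> sgn x = 1" if "x \<noteq> 0" for x :: 'a
    using that by (simp add: dot_square_norm norm_sgn)
  have descent: "x \<bullet> - u < 0" if "x \<noteq> 0" "sgn x \<bullet> u = (u \<bullet> u) / 2" for x :: 'a
  proof -
    have "x \<bullet> u = norm x * (sgn x \<bullet> u)" using that(1) by (simp add: sgn_div_norm)
    moreover have "0 < norm x * (u \<bullet> u)" using that(1) \<open>0 < u \<bullet> u\<close> by simp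
    ultimately show ?thesis using that(2) by simp
  qed
  have "sgn (F q) \<bullet> u = (u \<bullet> u) / 2" "sgn (G q) \<bullet> u = (u \<bullet> u) / 2"
    using unit[OF assms(1)] unit[OF assms(2)] inner_commute[of "sgn (G q)" "sgn (F q)"]
    by (simp_all add: u_def inner_add_left inner_add_right)
  then have "F q \<bullet> - u < 0" "G q \<bullet> - u < 0"
    using descent assms by blast+
  then show False
    using parabola_not_common_descent[of 0 1 "- u"] by simp
qed

lemma second_order_condition:
  assumes "F q \<noteq> 0" "G q \<noteq> 0" "G q \<bullet> v = 0"
  shows "norm (G q) * (F' v \<bullet> v) + norm (F q) * (G' v \<bullet> v) \<ge> 0"
proof (rule ccontr)
  define X Y where "X = F' v \<bullet> v" and "Y = G' v \<bullet> v"
  \<comment> \<open>with this \<open>k\<close> both second-order coefficients are positive multiples of \<open>|G| X + |F| Y\<close>\<close>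
  define k where "k = (X / norm (F q) - Y / norm (G q)) / 4"
  assume "\<not> ?thesis"
  then have neg: "norm (G q) * X + norm (F q) * Y < 0" by (simp add: X_def Y_def)
  have "F q = norm (F q) *\<^sub>R sgn (F q)"
    using assms by (simp add: sgn_div_norm)
  also have "\<dots> = - (norm (F q) / norm (G q)) *\<^sub>R G q"
    using sgn_gradients_opposite[OF assms(1,2)] by (simp add: sgn_div_norm divide_inverse_commute)
  finally have F_eq: "F q = - (norm (F q) / norm (G q)) *\<^sub>R G q" .
  have "F q \<bullet> v = 0" using assms(3) by (subst F_eq) simp
  moreover have "G q \<bullet> sgn (G q) = norm (G q)"
    using assms by (simp add: sgn_div_norm dot_square_norm power2_eq_square)
  moreover have "F q \<bullet> sgn (G q) = - norm (F q)"
    using assms \<open>G q \<bullet> sgn (G q) = norm (G q)\<close> by (subst F_eq) simp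
  moreover have "X + 2 * k * (- norm (F q)) = (norm (G q) * X + norm (F q) * Y) / (2 * norm (G q))"
    "Y + 2 * k * norm (G q) = (norm (G q) * X + norm (F q) * Y) / (2 * norm (F q))"
    using assms by (simp_all add: k_def field_simps)
  then have "X + 2 * k * (- norm (F q)) < 0" "Y + 2 * k * norm (G q) < 0"
    using neg assms by (simp_all add: divide_neg_pos)
  ultimately show False
    using parabola_not_common_descent[of v k "sgn (G q)"] assms(3) by (simp add: X_def Y_def)
qed

end

lemma inner_sq_less_of_orthogonal_to_sum:
  fixes e u v :: "'a::real_inner"
  assumes "norm e = 1" "norm u = 1" "e + u \<noteq> 0" "(e + u) \<bullet> v = 0" "v \<noteq> 0"
  shows "(u \<bullet> v)\<^sup>2 < v \<bullet> v"
proof -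
  have "\<bar>u \<bullet> v\<bar> \<noteq> norm u * norm v"
  proof
    assume "\<bar>u \<bullet> v\<bar> = norm u * norm v"
    then have "v = norm v *\<^sub>R u \<or> v = - norm v *\<^sub>R u"
      using norm_cauchy_schwarz_abs_eq[of u v] assms(2) by auto
    then obtain c where "v = c *\<^sub>R u" by blast
    then have "(e + u) \<bullet> u = 0" using assms(4,5) by auto
    moreover have "(e + u) \<bullet> (e + u) = 2 * ((e + u) \<bullet> u)"
      using assms(1,2) by (simp add: inner_add_left inner_add_right inner_commute[of u e] norm_eq_1)
    ultimately show False using assms(3) by simp
  qed
  then have "\<bar>u \<bullet> v\<bar> < norm v" using Cauchy_Schwarz_ineq2[of u v] assms(2) by simp
  then have "\<bar>u \<bullet> v\<bar>\<^sup>2 < (norm v)\<^sup>2" by (intro power_strict_mono) auto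
  then show ?thesis by (simp add: power2_norm_eq_inner)
qed

lemma sgn_diff_add_eq_0_imp_mem_segment:
  fixes x a b :: "'a::euclidean_space"
  assumes "sgn (x - a) + sgn (x - b) = 0"
  shows "x \<in> closed_segment a b"
proof (cases "x = a")
  case False
  have polar: "y = norm y *\<^sub>R sgn y" for y :: 'a by (cases "y = 0") (simp_all add: sgn_div_norm)
  have "a - b = norm (x - b) *\<^sub>R sgn (x - b) - norm (x - a) *\<^sub>R sgn (x - a)"
    using polar[of "x - a"] polar[of "x - b"] by (simp add: algebra_simps)
  also have "\<dots> = - ((norm (x - b) + norm (x - a)) *\<^sub>R sgn (x - a))"
    using assms by (simp add: add_eq_0_iff scaleR_add_left)
  finally have "dist a b = dist a x + dist x b"
    using False by (simp add: dist_norm norm_minus_commute norm_sgn)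
  then show ?thesis using between[of a b x] between_mem_segment by blast
qed simp

lemma diff_shift_focus: "q - (a + s *\<^sub>R sgn (q - a)) = (norm (q - a) - s) *\<^sub>R sgn (q - a)"
proof (cases "q = a")
  case False
  then have "q - a = norm (q - a) *\<^sub>R sgn (q - a)" by (simp add: sgn_div_norm)
  then show ?thesis by (simp add: algebra_simps)
qed simp

lemma sgn_diff_shift_focus:
  assumes "s < norm (q - a)"
  shows "sgn (q - (a + s *\<^sub>R sgn (q - a))) = sgn (q - a)"
proof -
  have "sgn (sgn x) = sgn x" for x :: 'a
    by (cases "x = 0") (simp_all add: sgn_div_norm[of "sgn x"] norm_sgn)
  then show ?thesis using assms by (simp add: diff_shift_focus sgn_scaleR)
qed

lemma phi_convex: "convex_on UNIV (\<lambda>x. phi x y y')"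
proof -
  have "(\<lambda>x. phi x y y') = (\<lambda>x. dist y x + dist y' x)"
    by (simp add: fun_eq_iff phi_def dist_norm norm_minus_commute)
  then show ?thesis by (simp add: convex_on_add convex_on_dist)
qed

lemma phi_less_on_segment:
  assumes "z \<in> closed_segment a b" "z \<noteq> a" "phi a y y' \<le> c" "phi b y y' < c"
  shows "phi z y y' < c"
proof -
  obtain u where u: "0 \<le> u" "u \<le> 1" "z = (1 - u) *\<^sub>R a + u *\<^sub>R b"
    using assms(1) unfolding closed_segment_def by blast
  with assms(2) have "0 < u" by (cases "u = 0") auto
  have "phi z y y' \<le> (1 - u) * phi a y y' + u * phi b y y'"
    using convex_onD[OF phi_convex, of u a b] u by simp
  also have "\<dots> < (1 - u) * c + u * c"
    using assms(3,4) u(2) \<open>0 < u\<close> by (intro add_le_less_mono mult_left_mono mult_strict_left_mono) auto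
  finally show ?thesis by (simp add: algebra_simps)
qed

lemma norm_diff_less_phi:
  assumes "x \<notin> closed_segment y y'"
  shows "norm (y - y') < phi x y y'"
  using assms dist_triangle[of y y' x] between[of y y' x] between_mem_segment[of y y' x]
  by (auto simp: phi_def dist_norm)

lemma phi_ge_inside_of_frontier_ge:
  assumes "x \<in> D" "y \<notin> D" and frontier_ge: "\<And>z. z \<in> frontier D \<Longrightarrow> c \<le> phi z y y'"
    and "norm (y - y') < c"
  shows "c \<le> phi x y y'"
proof (rule ccontr)
  assume "\<not> c \<le> phi x y y'"
  obtain z where z: "z \<in> closed_segment x y" "z \<in> frontier D"
    using connected_Int_frontier[of "closed_segment x y" D] assms(1,2) by auto
  have "phi z y y' < c"
  proof (cases "z = x")
    case False
    have "phi y y y' < c" using assms(4) by (simp add: phi_def)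
    then show ?thesis using phi_less_on_segment[OF z(1) False] \<open>\<not> c \<le> phi x y y'\<close> by simp
  qed (use \<open>\<not> c \<le> phi x y y'\<close> in simp)
  then show False using frontier_ge[OF z(2)] by simp
qed

lemma phi_eq_on_ray_imp_eq:
  assumes "norm A = 1" "0 \<le> \<mu>" "0 \<le> \<nu>"
    and eq: "phi (a + \<mu> *\<^sub>R A) y a = phi (a + \<nu> *\<^sub>R A) y a"
    and focus: "norm (y - a) < phi (a + \<mu> *\<^sub>R A) y a"
  shows "\<mu> = \<nu>"
proof -
  have impossible: False if "0 \<le> \<mu>" "\<mu> < \<nu>" "phi (a + \<mu> *\<^sub>R A) y a = phi (a + \<nu> *\<^sub>R A) y a"
    "norm (y - a) < phi (a + \<mu> *\<^sub>R A) y a" for \<mu> \<nu>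
  proof -
    define x z where "x = a + \<mu> *\<^sub>R A" and "z = a + \<nu> *\<^sub>R A"
    have "x - z = (\<mu> - \<nu>) *\<^sub>R A" by (simp add: x_def z_def scaleR_left_diff_distrib)
    then have "norm (x - a) = \<mu>" "norm (z - a) = \<nu>" "norm (x - z) = \<nu> - \<mu>"
      using that \<open>norm A = 1\<close> by (auto simp: x_def z_def)
    then have "dist x y = dist x z + dist z y"
      using that(3) by (simp add: phi_def x_def z_def dist_norm norm_minus_commute)
    then have "z \<in> closed_segment x y"
      using between[of x y z] between_mem_segment by (metis dist_commute)
    moreover have "z \<noteq> x" using \<open>norm (x - z) = \<nu> - \<mu>\<close> that(2) by auto
    moreover have "phi y y a < phi x y a" using that(4) by (simp add: phi_def x_def)
    ultimately have "phi z y a < phi x y a" using phi_less_on_segment by blast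
    then show False using that(3) by (simp add: x_def z_def)
  qed
  show ?thesis
  proof (cases \<mu> \<nu> rule: linorder_cases)
    case less
    then show ?thesis using impossible[of \<mu> \<nu>] assms by simp
  next
    case greater
    then show ?thesis using impossible[of \<nu> \<mu>] assms by simp
  qed
qed

lemma phi_shift_focus_ge:
  assumes "norm A = 1" "0 \<le> s"
  shows "phi x y y' - s \<le> phi x y (y' + s *\<^sub>R A)"
  using norm_triangle_ineq[of "x - (y' + s *\<^sub>R A)" "s *\<^sub>R A"] assms by (simp add: phi_def algebra_simps)

lemma phi_shift_focus_eq_imp_on_ray:
  assumes "norm A = 1" "0 < s" "phi x y (y' + s *\<^sub>R A) = phi x y y' - s"
  shows "x = y' + norm (x - y') *\<^sub>R A"
proof -
  define z where "z = y' + s *\<^sub>R A"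
  have "dist x y' = dist x z + dist z y'"
    using assms by (simp add: phi_def z_def dist_norm)
  then have "norm (x - z) *\<^sub>R (s *\<^sub>R A) = s *\<^sub>R (x - z)"
    using assms dist_triangle_eq[of x y' z] by (simp add: z_def)
  then have "s *\<^sub>R (x - z) = s *\<^sub>R (norm (x - z) *\<^sub>R A)" by (simp add: algebra_simps)
  then have "x - z = norm (x - z) *\<^sub>R A" using \<open>0 < s\<close> by (metis less_irrefl scaleR_cancel_left)
  then have "x = y' + (norm (x - z) + s) *\<^sub>R A" by (simp add: z_def algebra_simps)
  moreover have "norm (x - z) + s = norm (x - y')"
    using assms by (simp add: phi_def z_def)
  ultimately show ?thesis by simp
qed

lemma Lambda_shifted_focus_eq_singleton:
  assumes q: "q \<in> Lambda D p p'" and "q \<notin> closed_segment p p'"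
    and "0 < s" "s < norm (q - p')"
  shows "Lambda D p (p' + s *\<^sub>R sgn (q - p')) = {q}"
proof -
  define A where "A = sgn (q - p')"
  have "q \<noteq> p'" using assms(3,4) by auto
  then have A: "norm A = 1" by (simp add: A_def norm_sgn)
  have q_ray: "q = p' + norm (q - p') *\<^sub>R A" using \<open>q \<noteq> p'\<close> by (simp add: A_def sgn_div_norm)
  have shifted_q: "phi q p (p' + s *\<^sub>R A) = phi q p p' - s"
    using A assms(4) by (simp add: phi_def A_def diff_shift_focus)
  have q_min: "q \<in> frontier D" "\<And>x. x \<in> frontier D \<Longrightarrow> phi q p p' \<le> phi x p p'"
    using q by (auto simp: Lambda_def)
  have "x = q" if x: "x \<in> Lambda D p (p' + s *\<^sub>R A)" for x
  proof -
    have "x \<in> frontier D" and "phi x p (p' + s *\<^sub>R A) \<le> phi q p (p' + s *\<^sub>R A)"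
      using x q_min by (auto simp: Lambda_def)
    moreover have "phi x p p' - s \<le> phi x p (p' + s *\<^sub>R A)"
      using phi_shift_focus_ge[OF A] \<open>0 < s\<close> by simp
    ultimately have eqs: "phi x p p' = phi q p p'" "phi x p (p' + s *\<^sub>R A) = phi x p p' - s"
      using q_min(2) shifted_q by fastforce+
    have x_ray: "x = p' + norm (x - p') *\<^sub>R A"
      by (rule phi_shift_focus_eq_imp_on_ray[OF A \<open>0 < s\<close> eqs(2)])
    have "norm (p - p') < phi q p p'" using norm_diff_less_phi assms(2) by blast
    then have "norm (x - p') = norm (q - p')"
      using phi_eq_on_ray_imp_eq[OF A, of "norm (x - p')" "norm (q - p')" p' p] eqs x_ray q_ray
      by (simp add: norm_minus_commute)
    then show "x = q" using x_ray q_ray by simp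
  qed
  moreover have "q \<in> Lambda D p (p' + s *\<^sub>R A)"
  proof -
    have "phi q p (p' + s *\<^sub>R A) \<le> phi x p (p' + s *\<^sub>R A)" if "x \<in> frontier D" for x
      using q_min(2)[OF that] shifted_q phi_shift_focus_ge[OF A, of s x p p'] \<open>0 < s\<close> by simp
    then show ?thesis using q_min(1) by (simp add: Lambda_def)
  qed
  ultimately show ?thesis by (auto simp: A_def)
qed

lemma grad_eqI:
  assumes "(F has_derivative (\<lambda>h. G \<bullet> h)) (at x)"
  shows "grad F x = G"
  using frechet_derivative_at[OF assms, symmetric] by (simp add: grad_def vec_eq_iff inner_axis)

lemma shape_operator_tangent_form:
  fixes F :: "real^3 \<Rightarrow> real"
  assumes "open W" "q \<in> W"
    and F_deriv: "\<And>x. x \<in> W \<Longrightarrow> (F has_derivative (\<lambda>h. G x \<bullet> h)) (at x)"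
    and G_deriv: "(G has_derivative G') (at q)" and "G q \<noteq> 0" and "G q \<bullet> v = 0"
  shows "shape_operator F n q v \<bullet> v = - sgn (G q \<bullet> n) * (G' v \<bullet> v) / norm (G q)"
proof -
  define \<sigma> where "\<sigma> = sgn (grad F q \<bullet> n)"
  define N' where "N' h = \<sigma> *\<^sub>R ((G' h - (sgn (G q) \<bullet> G' h) *\<^sub>R sgn (G q)) /\<^sub>R norm (G q))" for h
  have grad: "grad F x = G x" if "x \<in> W" for x
    using grad_eqI[OF F_deriv[OF that]] .
  have "((\<lambda>x. \<sigma> *\<^sub>R sgn (G x)) has_derivative N') (at q)"
    unfolding N'_def
    by (intro has_derivative_scaleR_right has_derivative_compose[OF G_deriv has_derivative_sgn]) fact
  then have "((\<lambda>x. \<sigma> *\<^sub>R (grad F x /\<^sub>R norm (grad F x))) has_derivative N') (at q)"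
    by (rule has_derivative_transform_within_open[OF _ assms(1,2)]) (simp add: grad sgn_div_norm)
  then have "shape_operator F n q v = - N' v"
    by (simp add: shape_operator_def \<sigma>_def frechet_derivative_at[symmetric])
  then show ?thesis
    using assms(6) grad[OF assms(2)] by (simp add: N'_def \<sigma>_def inner_diff_left sgn_div_norm divide_inverse)
qed

lemma local_defining_functionE:
  assumes "local_defining_function D q U \<rho>" "q \<in> frontier D"
  obtains g H where "open U" "q \<in> U" "\<rho> q = 0" "\<And>x. x \<in> U \<Longrightarrow> \<rho> x < 0 \<Longrightarrow> x \<in> D"
    and "\<And>x. x \<in> U \<Longrightarrow> (\<rho> has_derivative (\<lambda>h. g x \<bullet> h)) (at x)"
    and "(g has_derivative (\<lambda>h. H *v h)) (at q)" and "g q \<noteq> 0"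
proof -
  have U: "open U" "q \<in> U" "\<forall>x\<in>U. grad \<rho> x \<noteq> 0" "D \<inter> U = {x\<in>U. \<rho> x < 0}"
    "frontier D \<inter> U = {x\<in>U. \<rho> x = 0}" and "C2_on U \<rho>"
    using assms(1) by (simp_all add: local_defining_function_def)
  then obtain g H where gH: "\<forall>x\<in>U. (\<rho> has_derivative (\<lambda>h. g x \<bullet> h)) (at x) \<and>
                                    (g has_derivative (\<lambda>h. H x *v h)) (at x)"
    by (auto simp: C2_on_def)
  then have "grad \<rho> q = g q" using U(2) grad_eqI by blast
  show thesis
    by (rule that[of g "H q"]) (use U gH assms(2) \<open>grad \<rho> q = g q\<close> in auto)
qed

lemma phi_has_derivative:
  assumes "x \<noteq> y" "x \<noteq> y'"
  shows "((\<lambda>x. phi x y y') has_derivative (\<lambda>h. (sgn (x - y) + sgn (x - y')) \<bullet> h)) (at x)"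
proof -
  have "(\<lambda>x. phi x y y') = (\<lambda>x. norm (x - y) + norm (x - y'))"
    by (simp add: fun_eq_iff phi_def norm_minus_commute)
  then show ?thesis
    using has_derivative_add[OF has_derivative_norm_diff[OF assms(1)] has_derivative_norm_diff[OF assms(2)]]
    by (simp add: inner_add_left)
qed

definition norm_diff_hessian :: "'a::real_inner \<Rightarrow> 'a \<Rightarrow> 'a \<Rightarrow> real" where
  "norm_diff_hessian a x v = (v \<bullet> v - (sgn (x - a) \<bullet> v)\<^sup>2) / norm (x - a)"

lemma phi_gradient_has_derivative:
  assumes "x \<noteq> y" "x \<noteq> y'"
  obtains G' where "((\<lambda>x. sgn (x - y) + sgn (x - y')) has_derivative G') (at x)"
    and "\<And>v. G' v \<bullet> v = norm_diff_hessian y x v + norm_diff_hessian y' x v"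
proof
  show "((\<lambda>x. sgn (x - y) + sgn (x - y')) has_derivative
      (\<lambda>h. (h - (sgn (x - y) \<bullet> h) *\<^sub>R sgn (x - y)) /\<^sub>R norm (x - y)
         + (h - (sgn (x - y') \<bullet> h) *\<^sub>R sgn (x - y')) /\<^sub>R norm (x - y'))) (at x)"
    using assms by (intro has_derivative_add has_derivative_sgn_diff)
qed (simp add: norm_diff_hessian_def inner_add_left inner_diff_left power2_eq_square divide_inverse_commute)

lemma phi_shape_operator_tangent_form:
  assumes "q \<noteq> y" "q \<noteq> y'" "sgn (q - y) + sgn (q - y') \<noteq> 0" "(sgn (q - y) + sgn (q - y')) \<bullet> v = 0"
  shows "shape_operator (\<lambda>x. phi x y y') n q v \<bullet> v
       = - sgn ((sgn (q - y) + sgn (q - y')) \<bullet> n)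
           * (norm_diff_hessian y q v + norm_diff_hessian y' q v) / norm (sgn (q - y) + sgn (q - y'))"
proof -
  obtain G' where G'_deriv: "((\<lambda>x. sgn (x - y) + sgn (x - y')) has_derivative G') (at q)"
    and G'_form: "\<And>v. G' v \<bullet> v = norm_diff_hessian y q v + norm_diff_hessian y' q v"
    using phi_gradient_has_derivative[OF assms(1,2)] by blast
  have "open (- {y, y'})" by (intro open_Compl finite_imp_closed) simp
  from shape_operator_tangent_form[OF this _ _ G'_deriv] assms show ?thesis
    by (simp add: G'_form phi_has_derivative)
qed

lemma norm_diff_hessian_shift_focus_less:
  assumes "0 < s" "s < norm (q - a)" "(sgn (q - a) \<bullet> v)\<^sup>2 < v \<bullet> v"
  shows "norm_diff_hessian a q v < norm_diff_hessian (a + s *\<^sub>R sgn (q - a)) q v"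
proof -
  have "q \<noteq> a" using assms by auto
  then have "norm (q - (a + s *\<^sub>R sgn (q - a))) = norm (q - a) - s"
    using assms(2) by (simp add: diff_shift_focus norm_sgn)
  moreover have "(v \<bullet> v - (sgn (q - a) \<bullet> v)\<^sup>2) / norm (q - a)
                 < (v \<bullet> v - (sgn (q - a) \<bullet> v)\<^sup>2) / (norm (q - a) - s)"
    using assms by (intro divide_strict_left_mono mult_pos_pos) auto
  ultimately show ?thesis
    using assms by (simp add: norm_diff_hessian_def sgn_diff_shift_focus)
qed

locale phi_boundary_minimizer =
  fixes U :: "(real^3) set" and q p p' :: "real^3"
    and \<rho> :: "real^3 \<Rightarrow> real" and g g' :: "real^3 \<Rightarrow> real^3"
  assumes open_U: "open U" and q_in_U: "q \<in> U"
    and minimizer: "\<And>x. x \<in> U \<Longrightarrow> \<rho> x < \<rho> q \<Longrightarrow> phi q p p' \<le> phi x p p'"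
    and \<rho>_deriv: "\<And>x. x \<in> U \<Longrightarrow> (\<rho> has_derivative (\<lambda>h. g x \<bullet> h)) (at x)"
    and g_deriv: "(g has_derivative g') (at q)" and g_nonzero: "g q \<noteq> 0"
    and not_between: "q \<notin> closed_segment p p'"
begin

abbreviation phi_grad :: "real^3" where
  "phi_grad \<equiv> sgn (q - p) + sgn (q - p')"

lemma q_ne_foci: "q \<noteq> p" "q \<noteq> p'"
  using not_between by auto

lemma phi_grad_nonzero: "phi_grad \<noteq> 0"
  using sgn_diff_add_eq_0_imp_mem_segment[of q p p'] not_between by auto

lemma grad_\<rho>: "grad \<rho> q = g q"
  using grad_eqI[OF \<rho>_deriv[OF q_in_U]] .

lemma sgn_grad_opposite: "sgn (g q) = - sgn phi_grad"
  and second_order: "phi_grad \<bullet> v = 0 \<Longrightarrow>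
     norm phi_grad * (g' v \<bullet> v) + norm (g q) * (norm_diff_hessian p q v + norm_diff_hessian p' q v) \<ge> 0"
proof -
  obtain \<Phi>' where \<Phi>'_deriv: "((\<lambda>x. sgn (x - p) + sgn (x - p')) has_derivative \<Phi>') (at q)"
    and \<Phi>'_form: "\<And>v. \<Phi>' v \<bullet> v = norm_diff_hessian p q v + norm_diff_hessian p' q v"
    using phi_gradient_has_derivative[OF q_ne_foci] by blast
  interpret no_common_descent "U - {p, p'}" q \<rho> "\<lambda>x. phi x p p'" g "\<lambda>x. sgn (x - p) + sgn (x - p')" g' \<Phi>'
  proof
    show "open (U - {p, p'})" using open_U by (auto intro: finite_imp_closed)
    show "q \<in> U - {p, p'}" using q_in_U q_ne_foci by simp
    show "(\<rho> has_derivative (\<lambda>h. g x \<bullet> h)) (at x)" if "x \<in> U - {p, p'}" for x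
      using that \<rho>_deriv by simp
    show "((\<lambda>x. phi x p p') has_derivative (\<lambda>h. (sgn (x - p) + sgn (x - p')) \<bullet> h)) (at x)"
      if "x \<in> U - {p, p'}" for x
      using that by (intro phi_has_derivative) auto
    show "(g has_derivative g') (at q)" by (fact g_deriv)
    show "((\<lambda>x. sgn (x - p) + sgn (x - p')) has_derivative \<Phi>') (at q)" by (fact \<Phi>'_deriv)
    fix x assume "x \<in> U - {p, p'}" "\<rho> x < \<rho> q" "phi x p p' < phi q p p'"
    then show False using minimizer by force
  qed
  show "sgn (g q) = - sgn phi_grad"
    using sgn_gradients_opposite g_nonzero phi_grad_nonzero by simp
  show "phi_grad \<bullet> v = 0 \<Longrightarrow>
     norm phi_grad * (g' v \<bullet> v) + norm (g q) * (norm_diff_hessian p q v + norm_diff_hessian p' q v) \<ge> 0"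
    using second_order_condition[of v] g_nonzero phi_grad_nonzero by (simp add: \<Phi>'_form)
qed

lemma inner_g_eq_0_iff: "g q \<bullet> v = 0 \<longleftrightarrow> phi_grad \<bullet> v = 0"
proof -
  have "sgn x \<bullet> v = 0 \<longleftrightarrow> x \<bullet> v = 0" for x :: "real^3" by (auto simp: sgn_div_norm)
  from this[of "g q"] this[of phi_grad] show ?thesis using sgn_grad_opposite by simp
qed

context
  fixes s :: real
  assumes s_pos: "0 < s" and s_less: "s < norm (q - p')"
begin

abbreviation shifted_focus :: "real^3" where
  "shifted_focus \<equiv> p' + s *\<^sub>R sgn (q - p')"

lemma q_ne_shifted_focus: "q \<noteq> shifted_focus"
proof -
  have "norm (q - shifted_focus) = norm (q - p') - s"
    using q_ne_foci(2) s_less by (simp add: diff_shift_focus norm_sgn)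
  then show ?thesis using s_less by auto
qed

lemma phi_grad_shifted_focus: "sgn (q - p) + sgn (q - shifted_focus) = phi_grad"
  using sgn_diff_shift_focus[OF s_less] by simp

lemma tangent_planes_shifted_focus:
  "tangent_plane \<rho> q = tangent_plane (\<lambda>x. phi x p shifted_focus) q"
  "tangent_plane (\<lambda>x. phi x p shifted_focus) q = tangent_plane (\<lambda>x. phi x p p') q"
  using grad_eqI[OF phi_has_derivative[OF q_ne_foci]]
    grad_eqI[OF phi_has_derivative[OF q_ne_foci(1) q_ne_shifted_focus]]
  by (auto simp: tangent_plane_def grad_\<rho> inner_g_eq_0_iff phi_grad_shifted_focus)

lemma shape_operator_shifted_focus_positive:
  assumes "g q \<bullet> v = 0" "v \<noteq> 0"
  shows "(shape_operator (\<lambda>x. phi x p shifted_focus) (sgn (g q)) q v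
           - shape_operator \<rho> (sgn (g q)) q v) \<bullet> v > 0"
proof -
  have tangent: "phi_grad \<bullet> v = 0" using assms(1) inner_g_eq_0_iff by blast
  have inner_sgn_self: "x \<bullet> sgn x = norm x" for x :: "real^3"
    by (cases "x = 0") (simp_all add: sgn_div_norm dot_square_norm power2_eq_square)
  have S_phi: "shape_operator (\<lambda>x. phi x p shifted_focus) (sgn (g q)) q v \<bullet> v
      = (norm_diff_hessian p q v + norm_diff_hessian shifted_focus q v) / norm phi_grad"
    using phi_shape_operator_tangent_form[OF q_ne_foci(1) q_ne_shifted_focus, of v "sgn (g q)"]
      phi_grad_nonzero tangent
    by (simp add: phi_grad_shifted_focus sgn_grad_opposite inner_sgn_self add_divide_distrib)
  have S_\<rho>: "shape_operator \<rho> (sgn (g q)) q v \<bullet> v = - (g' v \<bullet> v) / norm (g q)"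
    using shape_operator_tangent_form[OF open_U q_in_U \<rho>_deriv g_deriv g_nonzero assms(1)] g_nonzero
    by (simp add: inner_sgn_self)
  have "(sgn (q - p') \<bullet> v)\<^sup>2 < v \<bullet> v"
    using inner_sq_less_of_orthogonal_to_sum[OF _ _ phi_grad_nonzero tangent assms(2)] q_ne_foci
    by (simp add: norm_sgn)
  then have shift_less: "norm_diff_hessian p' q v < norm_diff_hessian shifted_focus q v"
    using norm_diff_hessian_shift_focus_less[OF s_pos s_less] by blast
  have "0 \<le> (norm phi_grad * (g' v \<bullet> v) + norm (g q) * (norm_diff_hessian p q v + norm_diff_hessian p' q v))
             / (norm phi_grad * norm (g q))"
    using second_order[OF tangent] by simp
  also have "\<dots> = (norm_diff_hessian p q v + norm_diff_hessian p' q v) / norm phi_grad + g' v \<bullet> v / norm (g q)"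
    using g_nonzero phi_grad_nonzero by (simp add: field_simps)
  also have "\<dots> < (norm_diff_hessian p q v + norm_diff_hessian shifted_focus q v) / norm phi_grad
                  + g' v \<bullet> v / norm (g q)"
    using shift_less phi_grad_nonzero by (simp add: divide_strict_right_mono)
  also have "\<dots> = (shape_operator (\<lambda>x. phi x p shifted_focus) (sgn (g q)) q v
                    - shape_operator \<rho> (sgn (g q)) q v) \<bullet> v"
    using S_phi S_\<rho> by (simp add: inner_diff_left)
  finally show ?thesis .
qed

end

end

lemma shape_operator_shifted_focus_comparison:
  assumes ldf: "local_defining_function D q U \<rho>" and "q \<in> frontier D"
    and inside: "\<And>x. x \<in> D \<Longrightarrow> phi q p p' \<le> phi x p p'"
    and "q \<notin> closed_segment p p'" "0 < s" "s < norm (q - p')"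
  shows "let F = (\<lambda>x. phi x p (p' + s *\<^sub>R sgn (q - p'))); \<nu> = outward_normal \<rho> q
      in tangent_plane \<rho> q = tangent_plane F q \<and> tangent_plane F q = tangent_plane (\<lambda>x. phi x p p') q
         \<and> (\<forall>v\<in>tangent_plane \<rho> q. v \<noteq> 0 \<longrightarrow> (shape_operator F \<nu> q v - shape_operator \<rho> \<nu> q v) \<bullet> v > 0)"
proof -
  obtain g H where U: "open U" "q \<in> U" "\<rho> q = 0" "\<And>x. x \<in> U \<Longrightarrow> \<rho> x < 0 \<Longrightarrow> x \<in> D"
    and \<rho>_deriv: "\<And>x. x \<in> U \<Longrightarrow> (\<rho> has_derivative (\<lambda>h. g x \<bullet> h)) (at x)"
    and g_deriv: "(g has_derivative (\<lambda>h. H *v h)) (at q)" and "g q \<noteq> 0"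
    using local_defining_functionE[OF ldf \<open>q \<in> frontier D\<close>] by blast
  interpret phi_boundary_minimizer U q p p' \<rho> g "\<lambda>h. H *v h"
    by unfold_locales (use U inside \<rho>_deriv g_deriv \<open>g q \<noteq> 0\<close> \<open>q \<notin> closed_segment p p'\<close> in auto)
  have "outward_normal \<rho> q = sgn (g q)"
    by (simp add: outward_normal_def grad_\<rho> sgn_div_norm)
  then show ?thesis
    using tangent_planes_shifted_focus[OF \<open>0 < s\<close> \<open>s < norm (q - p')\<close>]
      shape_operator_shifted_focus_positive[OF \<open>0 < s\<close> \<open>s < norm (q - p')\<close>]
    by (auto simp: Let_def tangent_plane_def grad_\<rho>)
qed

theorem proposition5p2:
  fixes D :: "(real^3) set" and p p' q :: "real^3" and \<eta>' s c :: real
  assumes "D \<noteq> {}" and "bounded D" and "open D" and "C2_boundary D"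
    and "p \<notin> closure D" and "p' \<notin> closure D"
    and "closed_segment p p' \<inter> closure D = {}"
    and "\<eta>' > 0" and "cball p' \<eta>' \<inter> closure D = {}"
    and c_def: "c = (INF x\<in>frontier D. phi x p p')"
    and "0 < s" and "s < \<eta>'"
    and "q \<in> Lambda D p p'"
  shows "Lambda D p (p' + s *\<^sub>R ((q - p') /\<^sub>R norm (q - p'))) = {q}
       \<and> (s < (c - norm (p - p')) / 2 \<longrightarrow>
          (\<forall>U \<rho>. local_defining_function D q U \<rho> \<longrightarrow>
             (let F = (\<lambda>x. phi x p (p' + s *\<^sub>R ((q - p') /\<^sub>R norm (q - p'))));
                  \<nu> = outward_normal \<rho> q
              in tangent_plane \<rho> q = tangent_plane F q
                 \<and> tangent_plane F q = tangent_plane (\<lambda>x. phi x p p') q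
                 \<and> (\<forall>v\<in>tangent_plane \<rho> q. v \<noteq> 0 \<longrightarrow>
                      (shape_operator F \<nu> q v - shape_operator \<rho> \<nu> q v) \<bullet> v > 0))))"
proof -
  have q: "q \<in> frontier D" "\<And>x. x \<in> frontier D \<Longrightarrow> phi q p p' \<le> phi x p p'"
    using \<open>q \<in> Lambda D p p'\<close> by (auto simp: Lambda_def)
  then have "q \<in> closure D" by (simp add: frontier_def)
  then have not_between: "q \<notin> closed_segment p p'" and "q \<notin> cball p' \<eta>'"
    using assms(7,9) by blast+
  then have "s < norm (q - p')" using \<open>s < \<eta>'\<close> by (simp add: dist_norm norm_minus_commute)
  have "phi q p p' \<le> phi x p p'" if "x \<in> D" for x
    using phi_ge_inside_of_frontier_ge[OF that _ q(2) norm_diff_less_phi[OF not_between]]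
      \<open>p \<notin> closure D\<close> closure_subset by blast
  note comparison = shape_operator_shifted_focus_comparison[OF _ q(1) this not_between \<open>0 < s\<close> \<open>s < norm (q - p')\<close>]
  have "(q - p') /\<^sub>R norm (q - p') = sgn (q - p')" by (simp add: sgn_div_norm)
  then show ?thesis
    using Lambda_shifted_focus_eq_singleton[OF \<open>q \<in> Lambda D p p'\<close> not_between \<open>0 < s\<close> \<open>s < norm (q - p')\<close>]
      comparison by simp
qed

end
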